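(* Let $k\ge2^{10}$ and let $s$ be a positive integer. Let $\Phi$ be an $n\times N$ complex matrix whose columns $\mathbf u_1,\dots,\mathbf u_N$ satisfy $\|\mathbf u_j\|_2=1$, and assume its coherence parameter satisfies $\mu\le1/k$. Assume also that for some $\delta\ge0$ and any disjoint $J_1,J_2\subset\{1,\dots,N\}$ with $|J_1|\le k$, $|J_2|\le k$ we have $$\left|\left\langle\sum_{j\in J_1}\mathbf u_j,\sum_{j\in J_2}\mathbf u_j\right\rangle\right|\le\delta k.$$ Then $\Phi$ satisfies the Restricted Isometry Property of order $2sk$ with constant $44s\sqrt{\delta}\log k$.
   Context: The coherence is $\mu=\max_{r\ne s}|\langle\mathbf u_r,\mathbf u_s\rangle|$. A vector $\mathbf x\in\mathbb C^N$ is $K$-sparse if it has at most $K$ nonzero coordinates; $\Phi$ satisfies RIP of order $K$ with constant $\delta'$ if $(1-\delta')\|\mathbf x\|_2^2\le\|\Phi\mathbf x\|_2^2\le(1+\delta')\|\mathbf x\|_2^2$ for all $K$-sparse $\mathbf x$. *)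

theory Defs
  imports "HOL-Analysis.Analysis"
begin

text \<open>Vectors in C^n are represented as functions nat => complex, only coordinates
  i < n being relevant. The matrix Phi (n x N) is given by its columns u j, j in {1..N}.\<close>

definition cinner :: "nat \<Rightarrow> (nat \<Rightarrow> complex) \<Rightarrow> (nat \<Rightarrow> complex) \<Rightarrow> complex" where
  "cinner n x y = (\<Sum>i<n. x i * cnj (y i))"

definition cnorm2 :: "nat \<Rightarrow> (nat \<Rightarrow> complex) \<Rightarrow> real" where
  "cnorm2 n x = sqrt (\<Sum>i<n. (cmod (x i))\<^sup>2)"

definition coherence :: "nat \<Rightarrow> nat \<Rightarrow> (nat \<Rightarrow> nat \<Rightarrow> complex) \<Rightarrow> real" where
  "coherence n N u = Max ({cmod (cinner n (u r) (u s)) | r s. r \<in> {1..N} \<and> s \<in> {1..N} \<and> r \<noteq> s} \<union> {0})"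

definition matvec :: "nat \<Rightarrow> (nat \<Rightarrow> nat \<Rightarrow> complex) \<Rightarrow> (nat \<Rightarrow> complex) \<Rightarrow> (nat \<Rightarrow> complex)" where
  "matvec N u x = (\<lambda>i. \<Sum>j\<in>{1..N}. x j * u j i)"

definition sparse :: "nat \<Rightarrow> nat \<Rightarrow> (nat \<Rightarrow> complex) \<Rightarrow> bool" where
  "sparse N K x \<longleftrightarrow> card {j \<in> {1..N}. x j \<noteq> 0} \<le> K"

definition RIP :: "nat \<Rightarrow> nat \<Rightarrow> (nat \<Rightarrow> nat \<Rightarrow> complex) \<Rightarrow> nat \<Rightarrow> real \<Rightarrow> bool" where
  "RIP n N u K d \<longleftrightarrow> (\<forall>x. sparse N K x \<longrightarrow>
     (1 - d) * (cnorm2 N (\<lambda>j. x (j + 1)))\<^sup>2 \<le> (cnorm2 n (matvec N u x))\<^sup>2 \<and>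
     (cnorm2 n (matvec N u x))\<^sup>2 \<le> (1 + d) * (cnorm2 N (\<lambda>j. x (j + 1)))\<^sup>2)"

end

theory Submission
  imports Defs
begin

text \<open>Write \<open>G\<close> for the Gram matrix of the columns. For disjoint index sets \<open>A\<close>, \<open>B\<close> of size at most
  \<open>k\<close>, the block sum of \<open>G\<close> over \<open>A \<times> B\<close> is at most \<open>\<delta> k\<close> by hypothesis and at most \<open>|A| |B| / k\<close>
  by coherence. A nonnegative coefficient vector on such a block, of \<open>\<ell>\<^sup>2\<close>-norm \<open>\<lambda>\<close>, is cut into about
  \<open>log\<^sub>4 k\<close> dyadic layers, layer \<open>p\<close> having entries at most \<open>\<lambda> / 2\<^sup>p\<close> on at most \<open>4\<^sup>p\<close> coordinates.
  A bilinear form with coefficients in \<open>[0, \<theta>]\<close> is dominated by \<open>\<theta>\<close> times a 0/1 form, so layers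
  \<open>p\<close> and \<open>q\<close> contribute at most \<open>\<lambda> \<kappa> min (\<delta> k / 2\<^sup>p\<^sup>+\<^sup>q) (2\<^sup>p\<^sup>+\<^sup>q / k)\<close>; these terms sum
  geometrically to \<open>O(\<surd>\<delta>)\<close> along each row, hence to \<open>O(\<surd>\<delta> log k)\<close> for the block. Complex
  coefficients are split into four nonnegative quadrant parts, a diagonal block is reduced to
  off-diagonal ones by averaging over all bipartitions, and a \<open>2sk\<close>-sparse vector is cut into
  \<open>2s\<close> blocks of size \<open>k\<close>.\<close>

section \<open>Geometric sums and numerical bounds\<close>

lemma sum_power_half_le_two:
  assumes "finite S"
  shows "(\<Sum>j\<in>S. (1/2::real)^j) \<le> 2"
proof -
  have "(\<Sum>j\<in>S. (1/2::real)^j) \<le> (\<Sum>j. (1/2)^j)"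
    by (rule sum_le_suminf) (use assms in \<open>auto intro: summable_geometric\<close>)
  also have "\<dots> = 2"
    by (simp add: suminf_geometric)
  finally show ?thesis .
qed

lemma sum_power_half_atLeast_le:
  assumes "finite M"
  shows "(\<Sum>m\<in>{m\<in>M. c \<le> m}. (1/2::real)^m) \<le> 2 * (1/2)^c"
proof -
  have "(\<Sum>m\<in>{m\<in>M. c \<le> m}. (1/2::real)^m) = (1/2)^c * (\<Sum>m\<in>{m\<in>M. c \<le> m}. (1/2)^(m - c))"
    by (simp add: sum_distrib_left power_add[symmetric])
  also have "(\<Sum>m\<in>{m\<in>M. c \<le> m}. (1/2::real)^(m - c)) = (\<Sum>j\<in>(\<lambda>m. m - c) ` {m\<in>M. c \<le> m}. (1/2)^j)"
    by (rule sum.reindex[symmetric, unfolded comp_def]) (auto simp: inj_on_def)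
  also have "\<dots> \<le> 2"
    using assms by (intro sum_power_half_le_two) simp
  finally show ?thesis
    by simp
qed

lemma sum_power_two_atMost_le: "(\<Sum>m\<in>{m\<in>M. m \<le> c}. (2::real)^m) \<le> 2 * 2^c"
proof -
  have "(\<Sum>m\<in>{m\<in>M. m \<le> c}. (2::real)^m) = 2^c * (\<Sum>m\<in>{m\<in>M. m \<le> c}. (1/2)^(c - m))"
    by (auto simp: sum_distrib_left power_diff power_one_over intro!: sum.cong)
  also have "(\<Sum>m\<in>{m\<in>M. m \<le> c}. (1/2::real)^(c - m)) = (\<Sum>j\<in>(\<lambda>m. c - m) ` {m\<in>M. m \<le> c}. (1/2)^j)"
    by (rule sum.reindex[symmetric, unfolded comp_def]) (auto simp: inj_on_def)
  also have "\<dots> \<le> 2"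
    by (intro sum_power_half_le_two) simp
  finally show ?thesis
    by simp
qed

lemma ex_power_interval:
  fixes x :: real
  assumes "1 \<le> x"
  obtains c where "4^c \<le> x" "x < 4 ^ Suc c"
proof -
  have "1 \<le> nat \<lfloor>x\<rfloor>"
    using assms by linarith
  then obtain c where c: "4^c \<le> nat \<lfloor>x\<rfloor>" "nat \<lfloor>x\<rfloor> < 4 ^ Suc c"
    using ex_power_ivl1[of 4 "nat \<lfloor>x\<rfloor>"] by auto
  have "real (4^c) \<le> real (nat \<lfloor>x\<rfloor>)" "real (nat \<lfloor>x\<rfloor>) + 1 \<le> real (4 ^ Suc c)"
    using c by (simp_all only: of_nat_le_iff flip: of_nat_Suc Suc_le_eq)
  moreover have "real (nat \<lfloor>x\<rfloor>) \<le> x" "x < real (nat \<lfloor>x\<rfloor>) + 1"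
    using assms by linarith+
  moreover have "real (4^c) = (4::real)^c" "real (4 ^ Suc c) = (4::real) ^ Suc c"
    by simp_all
  ultimately show ?thesis
    using that[of c] by linarith
qed

lemma two_mul_add_sq_div_le:
  fixes x t :: real
  assumes "0 < x" "x \<le> t" "t \<le> 2 * x"
  shows "2 * x + t^2 / x \<le> 3 * t"
proof -
  have "(2 * x - t) * (x - t) \<le> 0"
    using assms by (intro mult_nonneg_nonpos) auto
  then show ?thesis
    using assms(1) by (simp add: field_simps power2_eq_square algebra_simps)
qed

lemma sum_min_geometric_le:
  fixes X Y :: real
  assumes X: "0 \<le> X" and Y: "0 < Y" and M: "finite M"
  shows "(\<Sum>m\<in>M. min (X / 2^m) (Y * 2^m)) \<le> 3 * sqrt (X * Y)"
proof (cases "X < Y")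
  case True
  have "(\<Sum>m\<in>M. min (X / 2^m) (Y * 2^m)) \<le> (\<Sum>m\<in>M. X * (1/2)^m)"
    by (intro sum_mono) (simp add: power_one_over)
  also have "\<dots> \<le> X * 2"
    using sum_power_half_le_two[OF M] X by (simp add: mult_left_mono flip: sum_distrib_left)
  also have "X \<le> sqrt (X * Y)"
    using True X by (intro real_le_rsqrt) (simp add: power2_eq_square mult_left_mono)
  finally show ?thesis
    using X Y by (smt (verit) real_sqrt_ge_zero zero_le_mult_iff)
next
  case False
  then obtain c where c: "4^c \<le> X / Y" "X / Y < 4 ^ Suc c"
    using Y ex_power_interval[of "X / Y"] by auto
  define x :: real where "x = 2^c"
  define t where "t = sqrt (X / Y)"
  have x_sq: "x^2 = 4^c"
    unfolding x_def power2_eq_square power_mult_distrib[symmetric] by simp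
  have "x \<le> t"
    unfolding t_def by (rule real_le_rsqrt) (use c x_sq in simp)
  have "t \<le> 2 * x"
    unfolding t_def by (rule real_le_lsqrt) (use c x_sq in \<open>auto simp: x_def power_mult_distrib\<close>)
  have "(\<Sum>m\<in>M. min (X / 2^m) (Y * 2^m))
      = (\<Sum>m\<in>{m\<in>M. m \<le> c}. min (X / 2^m) (Y * 2^m)) + (\<Sum>m\<in>{m\<in>M. Suc c \<le> m}. min (X / 2^m) (Y * 2^m))"
    using M by (subst sum.union_disjoint[symmetric]) (auto intro: sum.cong)
  also have "(\<Sum>m\<in>{m\<in>M. m \<le> c}. min (X / 2^m) (Y * 2^m)) \<le> Y * (\<Sum>m\<in>{m\<in>M. m \<le> c}. 2^m)"
    by (simp add: sum_distrib_left sum_mono)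
  also have "\<dots> \<le> Y * (2 * x)"
    using sum_power_two_atMost_le Y by (simp add: x_def)
  also have "(\<Sum>m\<in>{m\<in>M. Suc c \<le> m}. min (X / 2^m) (Y * 2^m)) \<le> X * (\<Sum>m\<in>{m\<in>M. Suc c \<le> m}. (1/2)^m)"
    by (simp add: sum_distrib_left power_one_over sum_mono)
  also have "\<dots> \<le> X * (2 * (1/2) ^ Suc c)"
    using sum_power_half_atLeast_le[OF M] X by (intro mult_left_mono)
  also have "Y * (2 * x) + X * (2 * (1/2) ^ Suc c) = Y * (2 * x + t^2 / x)"
    using X Y by (simp add: t_def x_def power_one_over field_simps)
  also have "\<dots> \<le> Y * (3 * t)"
    using \<open>x \<le> t\<close> \<open>t \<le> 2 * x\<close> Y by (intro mult_left_mono two_mul_add_sq_div_le) (auto simp: x_def)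
  also have "Y * (3 * t) = 3 * sqrt (X * Y)"
    using Y by (simp add: t_def real_sqrt_divide real_sqrt_mult field_simps)
  finally show ?thesis
    by simp
qed

definition log4_ceiling :: "nat \<Rightarrow> nat" where
  "log4_ceiling k = (LEAST P. k \<le> 4^P)"

lemma le_four_power_log4_ceiling: "k \<le> 4 ^ log4_ceiling k"
proof -
  have "(2::nat)^k \<le> 4^k"
    by (rule power_mono) auto
  then have "k \<le> 4^k"
    using less_exp[of k] by linarith
  then show ?thesis
    unfolding log4_ceiling_def by (rule LeastI)
qed

lemma four_power_log4_ceiling_less:
  assumes "1 < k"
  shows "4 ^ (log4_ceiling k - 1) < k"
proof (rule ccontr)
  assume "\<not> 4 ^ (log4_ceiling k - 1) < k"
  then have "k \<le> 4 ^ (log4_ceiling k - 1)"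
    by simp
  then have "log4_ceiling k \<le> log4_ceiling k - 1"
    unfolding log4_ceiling_def by (rule Least_le)
  then have "log4_ceiling k = 0"
    by simp
  then show False
    using assms le_four_power_log4_ceiling[of k] by simp
qed

lemma ln_two_ge: "15/22 \<le> ln (2::real)"
proof -
  have "exp (15::real) = (exp 1)^15"
    by (simp flip: exp_of_nat_mult)
  also have "\<dots> \<le> (272/100)^15"
    using e_less_272 by (intro power_mono) auto
  also have "\<dots> \<le> (2::real)^22"
    by (simp add: power_divide divide_le_eq)
  finally have "15 \<le> ln ((2::real)^22)"
    by (subst ln_ge_iff) auto
  also have "\<dots> = 22 * ln 2"
    by (subst ln_realpow) auto
  finally show ?thesis
    by simp
qed

lemma log4_ceiling_le_ln:
  assumes "1024 \<le> k"
  shows "9 * real (log4_ceiling k) + 21 \<le> 11 * ln (real k)"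
proof -
  define P where "P = log4_ceiling k"
  have "10 * ln 2 = ln ((2::real)^10)"
    by (subst ln_realpow) auto
  also have "\<dots> \<le> ln (real k)"
    using assms by (subst ln_le_cancel_iff) auto
  finally have ten: "10 * ln 2 \<le> ln (real k)" .
  have "(4::nat)^(P - 1) = 2^(2 * (P - 1))"
    by (simp add: power_mult)
  then have "real (2^(2 * (P - 1))) < real k"
    using four_power_log4_ceiling_less[of k] assms unfolding P_def by (metis of_nat_less_iff less_le_trans one_less_numeral_iff semiring_norm(76) numeral_le_iff)
  then have "ln (2^(2 * (P - 1))) \<le> ln (real k)"
    using assms by (subst ln_le_cancel_iff) auto
  then have P_le: "real (2 * (P - 1)) * ln 2 \<le> ln (real k)"
    by (simp add: ln_realpow)
  show ?thesis
  proof (cases "P \<le> 6")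
    case True
    then show ?thesis
      using ten ln_two_ge by (simp add: P_def)
  next
    case False
    then have "real (2 * (P - 1)) = 2 * real P - 2"
      by simp
    have "(2 * real P - 2) * (15/22) \<le> (2 * real P - 2) * ln 2"
      using ln_two_ge False by (intro mult_left_mono) auto
    also have "\<dots> \<le> ln (real k)"
      using P_le \<open>real (2 * (P - 1)) = 2 * real P - 2\<close> by simp
    finally have "15 * real P - 15 \<le> 11 * ln (real k)"
      by (simp add: field_simps)
    then show ?thesis
      using False unfolding P_def[symmetric] by linarith
  qed
qed

lemma rip_constant_le:
  assumes "1024 \<le> k" "0 < s" "0 \<le> \<delta>"
  shows "4 * ((3 * real (log4_ceiling k) + 7) * sqrt \<delta>) * (real (2 * s) + 1) \<le> 44 * real s * sqrt \<delta> * ln (real k)"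
proof -
  have "4 * ((3 * real (log4_ceiling k) + 7) * sqrt \<delta>) * (real (2 * s) + 1)
      \<le> 4 * ((3 * real (log4_ceiling k) + 7) * sqrt \<delta>) * (3 * real s)"
    using assms by (intro mult_left_mono) auto
  also have "\<dots> = 4 * (9 * real (log4_ceiling k) + 21) * (real s * sqrt \<delta>)"
    by (simp add: algebra_simps)
  also have "\<dots> \<le> 4 * (11 * ln (real k)) * (real s * sqrt \<delta>)"
    using log4_ceiling_le_ln[OF assms(1)] assms by (intro mult_right_mono) auto
  finally show ?thesis
    by (simp add: algebra_simps)
qed

section \<open>Decompositions of coefficient vectors\<close>

lemma weighted_sum_le_subset_sum:
  fixes w :: "'a \<Rightarrow> real" and f :: "'a \<Rightarrow> complex"
  assumes A: "finite A" and w: "\<And>r. r \<in> A \<Longrightarrow> 0 \<le> w r \<and> w r \<le> \<theta>" and "0 \<le> \<theta>"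
  shows "\<exists>A' \<subseteq> {r\<in>A. w r \<noteq> 0}. cmod (\<Sum>r\<in>A. of_real (w r) * f r) \<le> \<theta> * cmod (\<Sum>r\<in>A'. f r)"
proof (cases "(\<Sum>r\<in>A. of_real (w r) * f r) = 0")
  case True
  then show ?thesis
    by (intro exI[of _ "{}"]) simp
next
  case False
  define Z where "Z = (\<Sum>r\<in>A. of_real (w r) * f r)"
  have "Z \<noteq> 0"
    using False by (simp add: Z_def)
  \<comment> \<open>rotate the sum onto the positive real axis and keep the terms with positive real part\<close>
  define \<omega> where "\<omega> = cnj Z / of_real (cmod Z)"
  have \<omega>_norm: "cmod \<omega> = 1"
    using \<open>Z \<noteq> 0\<close> by (simp add: \<omega>_def norm_divide)
  have "cnj Z * Z = of_real ((cmod Z)^2)"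
    by (metis complex_norm_square mult.commute)
  then have "\<omega> * Z = of_real (cmod Z)"
    using \<open>Z \<noteq> 0\<close> by (simp add: \<omega>_def power2_eq_square field_simps)
  then have "cmod Z = Re (\<omega> * Z)"
    by simp
  also have "\<dots> = (\<Sum>r\<in>A. w r * Re (\<omega> * f r))"
    by (simp add: Z_def sum_distrib_left algebra_simps)
  finally have Z_eq: "cmod Z = (\<Sum>r\<in>A. w r * Re (\<omega> * f r))" .
  define A' where "A' = {r\<in>A. w r \<noteq> 0 \<and> 0 < Re (\<omega> * f r)}"
  have A'_sub: "A' \<subseteq> {r\<in>A. w r \<noteq> 0}"
    by (auto simp: A'_def)
  have "(\<Sum>r\<in>A. w r * Re (\<omega> * f r))
      = (\<Sum>r\<in>A'. w r * Re (\<omega> * f r)) + (\<Sum>r\<in>A - A'. w r * Re (\<omega> * f r))"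
    using A A'_sub by (subst sum.subset_diff[of A' A]) auto
  moreover have "(\<Sum>r\<in>A - A'. w r * Re (\<omega> * f r)) \<le> 0"
    by (intro sum_nonpos) (auto simp: A'_def w mult_nonneg_nonpos)
  moreover have "(\<Sum>r\<in>A'. w r * Re (\<omega> * f r)) \<le> (\<Sum>r\<in>A'. \<theta> * Re (\<omega> * f r))"
    by (intro sum_mono mult_right_mono) (auto simp: A'_def w)
  moreover have "(\<Sum>r\<in>A'. \<theta> * Re (\<omega> * f r)) = \<theta> * Re (\<omega> * (\<Sum>r\<in>A'. f r))"
    by (simp add: sum_distrib_left)
  moreover have "\<dots> \<le> \<theta> * cmod (\<Sum>r\<in>A'. f r)"
    using \<open>0 \<le> \<theta>\<close> complex_Re_le_cmod \<omega>_norm by (metis mult_left_mono norm_mult mult_1)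
  ultimately show ?thesis
    using A'_sub Z_eq unfolding Z_def by (intro exI[of _ A']) auto
qed

definition quadrant_part :: "nat \<Rightarrow> complex \<Rightarrow> real" where
  "quadrant_part a z = max 0 (Re (z * (- \<i>)^a))"

lemma quadrant_part_nonneg: "0 \<le> quadrant_part a z"
  by (simp add: quadrant_part_def)

lemma sum_quadrant_parts: "(\<Sum>a<4. \<i>^a * of_real (quadrant_part a z)) = z"
  by (simp add: quadrant_part_def numeral_eq_Suc complex_eq_iff max_def)

lemma sum_sq_quadrant_parts: "(\<Sum>a<4. (quadrant_part a z)^2) = (cmod z)^2"
  unfolding cmod_power2 by (simp add: quadrant_part_def numeral_eq_Suc max_def power2_eq_square)

lemma sum_L2_set_quadrant_parts_le:
  "(\<Sum>a<4. L2_set (\<lambda>r. quadrant_part a (x r)) A) \<le> 2 * L2_set (\<lambda>r. cmod (x r)) A"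
proof -
  have "(\<Sum>a<4. L2_set (\<lambda>r. quadrant_part a (x r)) A)
      \<le> L2_set (\<lambda>a. L2_set (\<lambda>r. quadrant_part a (x r)) A) {..<4} * L2_set (\<lambda>_. 1) {..<4::nat}"
    using L2_set_mult_ineq[of "\<lambda>a. L2_set (\<lambda>r. quadrant_part a (x r)) A" "\<lambda>_. 1" "{..<4}"] by simp
  also have "L2_set (\<lambda>_. 1) {..<4::nat} = 2"
    by (simp add: L2_set_constant)
  also have "L2_set (\<lambda>a. L2_set (\<lambda>r. quadrant_part a (x r)) A) {..<4} = L2_set (\<lambda>r. cmod (x r)) A"
    by (simp add: L2_set_def sum_nonneg) (subst sum.swap, simp add: sum_sq_quadrant_parts)
  finally show ?thesis
    by simp
qed

definition dyadic_layer :: "nat \<Rightarrow> real \<Rightarrow> nat \<Rightarrow> real \<Rightarrow> real" where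
  "dyadic_layer P lam p t =
     (if p < P then min t (lam / 2^p) - min t (lam / 2^Suc p) else min t (lam / 2^P))"

lemma sum_dyadic_layers:
  assumes "t \<le> lam"
  shows "(\<Sum>p\<le>P. dyadic_layer P lam p t) = t"
proof -
  have "(\<Sum>p\<le>P. dyadic_layer P lam p t) = (\<Sum>p<P. min t (lam / 2^p) - min t (lam / 2^Suc p)) + min t (lam / 2^P)"
    by (simp add: dyadic_layer_def flip: lessThan_Suc_atMost)
  also have "\<dots> = t"
    using assms by (subst sum_lessThan_telescope') simp
  finally show ?thesis .
qed

lemma dyadic_layer_bounds:
  assumes "0 \<le> t" "0 \<le> lam"
  shows "0 \<le> dyadic_layer P lam p t \<and> dyadic_layer P lam p t \<le> lam / 2^(min (Suc p) P)"
proof (cases "p < P")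
  case True
  have "lam / 2^Suc p \<le> lam / 2^p"
    using assms by (intro divide_left_mono) auto
  moreover have "lam / 2^p - lam / 2^Suc p = lam / 2^Suc p"
    by (simp add: field_simps)
  ultimately show ?thesis
    using True assms by (auto simp: dyadic_layer_def min_def)
next
  case False
  then show ?thesis
    using assms by (auto simp: dyadic_layer_def min_def)
qed

lemma card_greater_mult_sq_le_L2_set:
  fixes y :: "'a \<Rightarrow> real"
  assumes "finite A" "0 < c"
  shows "real (card {r\<in>A. c < y r}) * c^2 \<le> (L2_set y A)^2"
proof -
  have "real (card {r\<in>A. c < y r}) * c^2 = (\<Sum>r\<in>{r\<in>A. c < y r}. c^2)"
    by simp
  also have "\<dots> \<le> (\<Sum>r\<in>{r\<in>A. c < y r}. (y r)^2)"
    using assms by (intro sum_mono power_mono) auto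
  also have "\<dots> \<le> (\<Sum>r\<in>A. (y r)^2)"
    using assms by (intro sum_mono2) auto
  finally show ?thesis
    by (simp add: L2_set_def sum_nonneg)
qed

lemma card_dyadic_layer_support_le:
  assumes A: "finite A" "card A \<le> 4^P" and y: "\<And>r. r \<in> A \<Longrightarrow> 0 \<le> y r"
    and lam: "lam = L2_set y A" "0 < lam"
  shows "real (card {r\<in>A. dyadic_layer P lam p (y r) \<noteq> 0}) \<le> 4^(min (Suc p) P)"
proof (cases "p < P")
  case False
  have "card {r\<in>A. dyadic_layer P lam p (y r) \<noteq> 0} \<le> card A"
    using A by (intro card_mono) auto
  then have "real (card {r\<in>A. dyadic_layer P lam p (y r) \<noteq> 0}) \<le> real (4^P)"
    using A(2) by linarith
  then show ?thesis
    using False by simp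
next
  case True
  define c where "c = lam / 2^Suc p"
  have c_pos: "0 < c"
    using lam by (simp add: c_def)
  have "{r\<in>A. dyadic_layer P lam p (y r) \<noteq> 0} \<subseteq> {r\<in>A. c < y r}"
  proof safe
    fix r
    assume "dyadic_layer P lam p (y r) \<noteq> 0"
    show "c < y r"
    proof (rule ccontr)
      assume "\<not> c < y r"
      moreover have "c \<le> lam / 2^p"
        using lam by (simp add: c_def divide_left_mono)
      ultimately have "dyadic_layer P lam p (y r) = 0"
        using True unfolding dyadic_layer_def c_def[symmetric] by simp
      then show False
        using \<open>dyadic_layer P lam p (y r) \<noteq> 0\<close> by simp
    qed
  qed
  then have "real (card {r\<in>A. dyadic_layer P lam p (y r) \<noteq> 0}) \<le> real (card {r\<in>A. c < y r})"
    using A by (simp add: card_mono)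
  then have "real (card {r\<in>A. dyadic_layer P lam p (y r) \<noteq> 0}) * c^2 \<le> lam^2"
    using card_greater_mult_sq_le_L2_set[OF A(1) c_pos, of y] lam
    by (meson mult_right_mono order_trans zero_le_power2)
  moreover have "lam^2 = (2^Suc p * 2^Suc p) * c^2"
    by (simp add: c_def power2_eq_square)
  moreover have "(2::real)^Suc p * 2^Suc p = 4^Suc p"
    unfolding power_mult_distrib[symmetric] by simp
  ultimately show ?thesis
    using True c_pos by simp
qed

lemma exists_partition_card_le:
  assumes J: "finite J" "card J \<le> m * k" and "0 < k"
  obtains B :: "nat \<Rightarrow> 'a set" where "\<And>i. B i \<subseteq> J" "\<And>i. card (B i) \<le> k"
    "\<And>i j. i \<noteq> j \<Longrightarrow> B i \<inter> B j = {}" "(\<Union>i<m. B i) = J"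
proof -
  obtain f where f: "bij_betw f {0..<card J} J"
    using ex_bij_betw_nat_finite[OF J(1)] by blast
  define B where "B i = f ` ({i * k..<Suc i * k} \<inter> {0..<card J})" for i
  have "B i \<subseteq> J" for i
    using f by (auto simp: B_def bij_betw_def)
  moreover have "card (B i) \<le> k" for i
  proof -
    have "card (B i) \<le> card {i * k..<Suc i * k}"
      unfolding B_def by (intro card_image_le[THEN le_trans] card_mono) auto
    then show ?thesis
      by simp
  qed
  moreover have "B i \<inter> B j = {}" if "i \<noteq> j" for i j
  proof -
    have "a div k = i" if "a \<in> {i * k..<Suc i * k}" for a i
      using that by (intro div_nat_eqI) (auto simp: mult.commute)
    then have "{i * k..<Suc i * k} \<inter> {j * k..<Suc j * k} = {}"
      using \<open>i \<noteq> j\<close> by blast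
    moreover have "B i \<inter> B j = f ` (({i * k..<Suc i * k} \<inter> {0..<card J}) \<inter> ({j * k..<Suc j * k} \<inter> {0..<card J}))"
      unfolding B_def using f by (intro inj_on_image_Int[symmetric]) (auto simp: bij_betw_def)
    ultimately show ?thesis
      by auto
  qed
  moreover have "(\<Union>i<m. B i) = J"
  proof
    show "J \<subseteq> (\<Union>i<m. B i)"
    proof
      fix x
      assume "x \<in> J"
      then have "x \<in> f ` {0..<card J}"
        using f by (simp add: bij_betw_def)
      then obtain a where a: "a < card J" "x = f a"
        by auto
      have "a div k < m"
        using a J \<open>0 < k\<close> by (simp add: less_mult_imp_div_less)
      moreover have "a \<in> {a div k * k..<Suc (a div k) * k}"
        using dividend_less_div_times[OF \<open>0 < k\<close>, of a] by simp
      ultimately have "x \<in> B (a div k)"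
        using a by (auto simp: B_def)
      then show "x \<in> (\<Union>i<m. B i)"
        using \<open>a div k < m\<close> by blast
    qed
  qed (use \<open>\<And>i. B i \<subseteq> J\<close> in auto)
  ultimately show ?thesis
    using that by blast
qed

lemma card_separating_subsets:
  assumes "finite A" "r \<in> A" "s \<in> A" "r \<noteq> s"
  shows "card {S\<in>Pow A. r \<in> S \<and> s \<notin> S} = 2^(card A - 2)"
proof -
  have "{S\<in>Pow A. r \<in> S \<and> s \<notin> S} = insert r ` Pow (A - {r, s})"
  proof
    show "{S\<in>Pow A. r \<in> S \<and> s \<notin> S} \<subseteq> insert r ` Pow (A - {r, s})"
    proof
      fix S
      assume "S \<in> {S\<in>Pow A. r \<in> S \<and> s \<notin> S}"
      then have "S = insert r (S - {r})" "S - {r} \<in> Pow (A - {r, s})"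
        by auto
      then show "S \<in> insert r ` Pow (A - {r, s})"
        by blast
    qed
  qed (use assms in auto)
  moreover have "inj_on (insert r) (Pow (A - {r, s}))"
    by (rule inj_onI) (metis Diff_iff Pow_iff insertI1 insert_Diff_single insert_absorb subsetD Diff_insert_absorb)
  ultimately have "card {S\<in>Pow A. r \<in> S \<and> s \<notin> S} = 2^card (A - {r, s})"
    using assms by (simp add: card_image card_Pow)
  also have "card (A - {r, s}) = card A - 2"
    using assms by (simp add: card_Diff_subset)
  finally show ?thesis .
qed

lemma sum_bipartitions:
  fixes T :: "'a \<Rightarrow> 'a \<Rightarrow> 'b::comm_semiring_1"
  assumes A: "finite A"
  shows "(\<Sum>S\<in>Pow A. \<Sum>r\<in>S. \<Sum>s\<in>A - S. T r s) = of_nat (2^(card A - 2)) * (\<Sum>r\<in>A. \<Sum>s\<in>A - {r}. T r s)"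
proof -
  have "(\<Sum>S\<in>Pow A. \<Sum>r\<in>S. \<Sum>s\<in>A - S. T r s)
      = (\<Sum>S\<in>Pow A. \<Sum>r\<in>A. \<Sum>s\<in>A. if r \<in> S \<and> s \<notin> S then T r s else 0)"
  proof (rule sum.cong[OF refl])
    fix S
    assume "S \<in> Pow A"
    then have "{r\<in>A. r \<in> S} = S" "\<And>r. {s\<in>A. r \<in> S \<and> s \<notin> S} = (if r \<in> S then A - S else {})"
      by auto
    then show "(\<Sum>r\<in>S. \<Sum>s\<in>A - S. T r s) = (\<Sum>r\<in>A. \<Sum>s\<in>A. if r \<in> S \<and> s \<notin> S then T r s else 0)"
      using A by (simp add: sum.inter_filter[symmetric] if_distrib[of "sum _"] cong: if_cong)
  qed
  also have "\<dots> = (\<Sum>r\<in>A. \<Sum>s\<in>A. \<Sum>S\<in>Pow A. if r \<in> S \<and> s \<notin> S then T r s else 0)"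
    by (subst sum.swap) (simp add: sum.swap[of _ "Pow A"])
  also have "\<dots> = (\<Sum>r\<in>A. \<Sum>s\<in>A. of_nat (card {S\<in>Pow A. r \<in> S \<and> s \<notin> S}) * T r s)"
    using A by (simp add: sum.inter_filter[symmetric])
  also have "\<dots> = (\<Sum>r\<in>A. \<Sum>s\<in>A - {r}. of_nat (2^(card A - 2)) * T r s)"
  proof (rule sum.cong[OF refl])
    fix r
    assume r: "r \<in> A"
    have "(\<Sum>s\<in>A. of_nat (card {S\<in>Pow A. r \<in> S \<and> s \<notin> S}) * T r s)
        = (\<Sum>s\<in>A - {r}. of_nat (card {S\<in>Pow A. r \<in> S \<and> s \<notin> S}) * T r s)"
      using A r by (simp add: sum.remove)
    also have "\<dots> = (\<Sum>s\<in>A - {r}. of_nat (2^(card A - 2)) * T r s)"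
      using A r by (intro sum.cong refl) (subst card_separating_subsets, auto)
    finally show "(\<Sum>s\<in>A. of_nat (card {S\<in>Pow A. r \<in> S \<and> s \<notin> S}) * T r s)
        = (\<Sum>s\<in>A - {r}. of_nat (2^(card A - 2)) * T r s)" .
  qed
  finally show ?thesis
    by (simp add: sum_distrib_left)
qed

lemma min_le_sqrt_mult:
  fixes a b :: real
  assumes "0 \<le> a" "0 \<le> b"
  shows "min a b \<le> sqrt (a * b)"
  using assms by (intro real_le_rsqrt) (simp add: power2_eq_square mult_mono min_le_iff_disj)

lemma layer_pair_scale_le:
  fixes lam kap \<alpha> \<beta> D K :: real
  assumes "0 \<le> lam" "0 \<le> kap" "0 \<le> \<alpha>" "0 \<le> \<beta>" "\<alpha> \<le> 4^a" "\<beta> \<le> 4^b" "0 < K"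
  shows "(lam / 2^a) * (kap / 2^b) * min D (\<alpha> * \<beta> / K) \<le> lam * kap * min (D / 2^(a + b)) (2^(a + b) / K)"
proof -
  have "\<alpha> * \<beta> \<le> 4^a * 4^b"
    using assms by (intro mult_mono) auto
  also have "(4::real)^a * 4^b = 2^(a + b) * 2^(a + b)"
    using power_mult_distrib[of "2::real" 2 a] power_mult_distrib[of "2::real" 2 b]
    by (simp add: power_add algebra_simps)
  finally have "\<alpha> * \<beta> / K / 2^(a + b) \<le> 2^(a + b) / K"
    using assms by (simp add: field_simps)
  then have "min D (\<alpha> * \<beta> / K) / 2^(a + b) \<le> min (D / 2^(a + b)) (2^(a + b) / K)"
    unfolding min_divide_distrib_right by (simp del: divide_divide_eq_left)
  then have "lam * kap * (min D (\<alpha> * \<beta> / K) / 2^(a + b)) \<le> lam * kap * min (D / 2^(a + b)) (2^(a + b) / K)"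
    using assms by (intro mult_left_mono) auto
  then show ?thesis
    by (simp add: power_add field_simps)
qed

lemma sum_sum_mult_expand:
  fixes x z :: "'i \<Rightarrow> 'a::comm_semiring_1"
  assumes "\<And>r. r \<in> A \<Longrightarrow> x r = (\<Sum>p\<in>P. L p r)" "\<And>s. s \<in> B \<Longrightarrow> z s = (\<Sum>q\<in>Q. M q s)"
  shows "(\<Sum>r\<in>A. \<Sum>s\<in>B. x r * z s * g r s) = (\<Sum>p\<in>P. \<Sum>q\<in>Q. \<Sum>r\<in>A. \<Sum>s\<in>B. L p r * M q s * g r s)"
proof -
  have "(\<Sum>r\<in>A. \<Sum>s\<in>B. x r * z s * g r s) = (\<Sum>r\<in>A. \<Sum>s\<in>B. \<Sum>p\<in>P. \<Sum>q\<in>Q. L p r * M q s * g r s)"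
    by (intro sum.cong refl) (simp add: assms sum_distrib_left sum_distrib_right mult_ac, rule sum.swap)
  also have "\<dots> = (\<Sum>r\<in>A. \<Sum>p\<in>P. \<Sum>s\<in>B. \<Sum>q\<in>Q. L p r * M q s * g r s)"
    by (intro sum.cong refl sum.swap)
  also have "\<dots> = (\<Sum>p\<in>P. \<Sum>r\<in>A. \<Sum>s\<in>B. \<Sum>q\<in>Q. L p r * M q s * g r s)"
    by (rule sum.swap)
  also have "\<dots> = (\<Sum>p\<in>P. \<Sum>r\<in>A. \<Sum>q\<in>Q. \<Sum>s\<in>B. L p r * M q s * g r s)"
    by (intro sum.cong refl sum.swap)
  also have "\<dots> = (\<Sum>p\<in>P. \<Sum>q\<in>Q. \<Sum>r\<in>A. \<Sum>s\<in>B. L p r * M q s * g r s)"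
    by (intro sum.cong refl sum.swap)
  finally show ?thesis .
qed

lemma power2_L2_set: "(L2_set f A)^2 = (\<Sum>i\<in>A. (f i)^2)"
  by (simp add: L2_set_def sum_nonneg)

lemma power2_sum_le_card_mult_sum_power2:
  fixes v :: "'a \<Rightarrow> real"
  assumes "\<And>i. i \<in> S \<Longrightarrow> 0 \<le> v i"
  shows "(\<Sum>i\<in>S. v i)^2 \<le> real (card S) * (\<Sum>i\<in>S. (v i)^2)"
proof -
  have "(\<Sum>i\<in>S. v i) \<le> L2_set v S * L2_set (\<lambda>_. 1) S"
    using L2_set_mult_ineq[of v "\<lambda>_. 1" S] assms by simp
  then have "(\<Sum>i\<in>S. v i)^2 \<le> (L2_set v S * sqrt (real (card S)))^2"
    using assms by (intro power_mono) (auto simp: L2_set_constant sum_nonneg)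
  then show ?thesis
    by (simp add: power_mult_distrib power2_L2_set mult.commute)
qed

section \<open>Gram matrices with bounded block sums\<close>

locale block_bounded_gram =
  fixes I :: "nat set" and G :: "nat \<Rightarrow> nat \<Rightarrow> complex" and k :: nat and \<delta> :: real
  assumes finite_index: "finite I"
    and k_pos: "0 < k"
    and \<delta>_nonneg: "0 \<le> \<delta>"
    and gram_diag: "\<And>r. r \<in> I \<Longrightarrow> G r r = 1"
    and block_sum_le: "\<And>A B. A \<subseteq> I \<Longrightarrow> B \<subseteq> I \<Longrightarrow> A \<inter> B = {} \<Longrightarrow> card A \<le> k \<Longrightarrow> card B \<le> k \<Longrightarrow>
       cmod (\<Sum>r\<in>A. \<Sum>s\<in>B. G r s) \<le> min (\<delta> * real k) (real (card A) * real (card B) / real k)"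
begin

text \<open>Relative to \<open>\<lambda> \<kappa>\<close>, the contribution of two dyadic layers whose exponents add up to \<open>m\<close>:
  the block hypothesis gives the first term, coherence the second.\<close>

definition pair_weight :: "nat \<Rightarrow> real" where
  "pair_weight m = min (\<delta> * real k / 2^m) (2^m / real k)"

lemma pair_weight_le: "pair_weight m \<le> sqrt \<delta>"
proof -
  have "pair_weight m \<le> sqrt (\<delta> * real k / 2^m * (2^m / real k))"
    unfolding pair_weight_def by (rule min_le_sqrt_mult) (use \<delta>_nonneg in auto)
  then show ?thesis
    using k_pos by simp
qed

lemma sum_pair_weight_le:
  assumes "finite M"
  shows "(\<Sum>m\<in>M. pair_weight m) \<le> 3 * sqrt \<delta>"
proof -
  have "(\<Sum>m\<in>M. pair_weight m) \<le> 3 * sqrt (\<delta> * real k * (1 / real k))"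
    unfolding pair_weight_def using sum_min_geometric_le[OF _ _ assms, of "\<delta> * real k" "1 / real k"] \<delta>_nonneg k_pos
    by simp
  then show ?thesis
    using k_pos by simp
qed

lemma sum_pair_weight_shift_le: "(\<Sum>q<Q. pair_weight (c + q)) \<le> 3 * sqrt \<delta>"
proof -
  have "(\<Sum>q<Q. pair_weight (c + q)) = (\<Sum>m\<in>(+) c ` {..<Q}. pair_weight m)"
    by (simp add: sum.reindex)
  also have "\<dots> \<le> 3 * sqrt \<delta>"
    by (intro sum_pair_weight_le) simp
  finally show ?thesis .
qed

lemma sum_layer_pair_weights_le:
  "(\<Sum>p\<le>P. \<Sum>q\<le>P. pair_weight (min (Suc p) P + min (Suc q) P)) \<le> (3 * real P + 7) * sqrt \<delta>"
proof -
  define e where "e p = min (Suc p) P" for p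
  \<comment> \<open>the exponents \<open>e q\<close> run through \<open>1, \<dots>, P\<close>, with \<open>P\<close> taken twice\<close>
  have split_last: "(\<Sum>p\<le>P. f p) = f P + (\<Sum>p<P. f p)" for f :: "nat \<Rightarrow> real"
    by (simp flip: lessThan_Suc_atMost)
  have row: "(\<Sum>q\<le>P. pair_weight (a + e q)) = pair_weight (a + P) + (\<Sum>q<P. pair_weight (Suc a + q))" for a
    by (subst split_last) (auto intro!: sum.cong simp: e_def)
  have "(\<Sum>p\<le>P. \<Sum>q\<le>P. pair_weight (e p + e q))
      = (\<Sum>q\<le>P. pair_weight (P + e q)) + (\<Sum>p<P. \<Sum>q\<le>P. pair_weight (Suc p + e q))"
    by (subst split_last) (auto intro!: sum.cong simp: e_def)
  also have "(\<Sum>q\<le>P. pair_weight (P + e q)) \<le> 4 * sqrt \<delta>"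
    using row[of P] pair_weight_le[of "P + P"] sum_pair_weight_shift_le[of "Suc P" P] by linarith
  also have "(\<Sum>p<P. \<Sum>q\<le>P. pair_weight (Suc p + e q))
      = (\<Sum>p<P. pair_weight (Suc p + P) + (\<Sum>q<P. pair_weight (Suc (Suc p) + q)))"
    by (rule sum.cong[OF refl]) (rule row)
  also have "\<dots> = (\<Sum>p<P. pair_weight (Suc p + P)) + (\<Sum>p<P. \<Sum>q<P. pair_weight (Suc (Suc p) + q))"
    by (rule sum.distrib)
  also have "(\<Sum>p<P. pair_weight (Suc p + P)) \<le> 3 * sqrt \<delta>"
    using sum_pair_weight_shift_le[of "Suc P" P] by (simp add: add.commute)
  also have "(\<Sum>p<P. \<Sum>q<P. pair_weight (Suc (Suc p) + q)) \<le> (\<Sum>p<P. 3 * sqrt \<delta>)"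
    by (intro sum_mono sum_pair_weight_shift_le)
  finally show ?thesis
    by (simp add: e_def algebra_simps)
qed

lemma weighted_block_form_le:
  assumes AB: "A \<subseteq> I" "B \<subseteq> I" "A \<inter> B = {}" "card A \<le> k" "card B \<le> k"
    and y: "\<And>r. r \<in> A \<Longrightarrow> 0 \<le> y r \<and> y r \<le> \<theta>" and w: "\<And>s. s \<in> B \<Longrightarrow> 0 \<le> w s \<and> w s \<le> \<eta>"
    and "0 \<le> \<theta>" "0 \<le> \<eta>"
  shows "cmod (\<Sum>r\<in>A. \<Sum>s\<in>B. of_real (y r) * of_real (w s) * G r s)
     \<le> \<theta> * \<eta> * min (\<delta> * real k) (real (card {r\<in>A. y r \<noteq> 0}) * real (card {s\<in>B. w s \<noteq> 0}) / real k)"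
proof -
  have fin: "finite A" "finite B"
    using finite_subset[OF AB(1) finite_index] finite_subset[OF AB(2) finite_index] .
  have "\<exists>A' \<subseteq> {r\<in>A. y r \<noteq> 0}. cmod (\<Sum>r\<in>A. of_real (y r) * (\<Sum>s\<in>B. of_real (w s) * G r s))
      \<le> \<theta> * cmod (\<Sum>r\<in>A'. \<Sum>s\<in>B. of_real (w s) * G r s)"
    by (rule weighted_sum_le_subset_sum[OF fin(1) y \<open>0 \<le> \<theta>\<close>])
  then obtain A' where A': "A' \<subseteq> {r\<in>A. y r \<noteq> 0}"
    and le_A': "cmod (\<Sum>r\<in>A. of_real (y r) * (\<Sum>s\<in>B. of_real (w s) * G r s))
      \<le> \<theta> * cmod (\<Sum>r\<in>A'. \<Sum>s\<in>B. of_real (w s) * G r s)"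
    by blast
  have "\<exists>B' \<subseteq> {s\<in>B. w s \<noteq> 0}.
      cmod (\<Sum>s\<in>B. of_real (w s) * (\<Sum>r\<in>A'. G r s)) \<le> \<eta> * cmod (\<Sum>s\<in>B'. \<Sum>r\<in>A'. G r s)"
    by (rule weighted_sum_le_subset_sum[OF fin(2) w \<open>0 \<le> \<eta>\<close>])
  then obtain B' where B': "B' \<subseteq> {s\<in>B. w s \<noteq> 0}"
    and le_B': "cmod (\<Sum>s\<in>B. of_real (w s) * (\<Sum>r\<in>A'. G r s)) \<le> \<eta> * cmod (\<Sum>s\<in>B'. \<Sum>r\<in>A'. G r s)"
    by blast
  have card_A': "card A' \<le> card {r\<in>A. y r \<noteq> 0}" "card {r\<in>A. y r \<noteq> 0} \<le> card A"
    using A' fin by (auto intro: card_mono)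
  have card_B': "card B' \<le> card {s\<in>B. w s \<noteq> 0}" "card {s\<in>B. w s \<noteq> 0} \<le> card B"
    using B' fin by (auto intro: card_mono)
  have "cmod (\<Sum>r\<in>A'. \<Sum>s\<in>B'. G r s) \<le> min (\<delta> * real k) (real (card A') * real (card B') / real k)"
  proof (rule block_sum_le)
    show "A' \<subseteq> I" "B' \<subseteq> I" "A' \<inter> B' = {}"
      using A' B' AB(1-3) by auto
    show "card A' \<le> k" "card B' \<le> k"
      using card_A' card_B' AB(4,5) by linarith+
  qed
  also have "\<dots> \<le> min (\<delta> * real k) (real (card {r\<in>A. y r \<noteq> 0}) * real (card {s\<in>B. w s \<noteq> 0}) / real k)"
    using card_A' card_B' by (intro min.mono order_refl divide_right_mono mult_mono) auto
  finally have le_sets: "cmod (\<Sum>s\<in>B'. \<Sum>r\<in>A'. G r s)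
      \<le> min (\<delta> * real k) (real (card {r\<in>A. y r \<noteq> 0}) * real (card {s\<in>B. w s \<noteq> 0}) / real k)"
    by (simp add: sum.swap[of _ A'])
  have "cmod (\<Sum>r\<in>A. \<Sum>s\<in>B. of_real (y r) * of_real (w s) * G r s)
      = cmod (\<Sum>r\<in>A. of_real (y r) * (\<Sum>s\<in>B. of_real (w s) * G r s))"
    by (simp add: sum_distrib_left mult.assoc)
  also have "\<dots> \<le> \<theta> * cmod (\<Sum>s\<in>B. of_real (w s) * (\<Sum>r\<in>A'. G r s))"
    using le_A' by (simp add: sum_distrib_left flip: sum.swap[of _ A'])
  also have "\<dots> \<le> \<theta> * (\<eta> * min (\<delta> * real k) (real (card {r\<in>A. y r \<noteq> 0}) * real (card {s\<in>B. w s \<noteq> 0}) / real k))"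
    using le_B' le_sets \<open>0 \<le> \<theta>\<close> \<open>0 \<le> \<eta>\<close> by (meson mult_left_mono order_trans)
  finally show ?thesis
    by (simp add: mult.assoc)
qed

lemma layer_pair_form_le:
  assumes AB: "A \<subseteq> I" "B \<subseteq> I" "A \<inter> B = {}" "card A \<le> k" "card B \<le> k" "card A \<le> 4^P" "card B \<le> 4^P"
    and y: "\<And>r. r \<in> A \<Longrightarrow> 0 \<le> y r" and w: "\<And>s. s \<in> B \<Longrightarrow> 0 \<le> w s"
    and lam: "lam = L2_set y A" "0 < lam" and kap: "kap = L2_set w B" "0 < kap"
  shows "cmod (\<Sum>r\<in>A. \<Sum>s\<in>B. of_real (dyadic_layer P lam p (y r)) * of_real (dyadic_layer P kap q (w s)) * G r s)
    \<le> lam * kap * pair_weight (min (Suc p) P + min (Suc q) P)"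
proof -
  have fin: "finite A" "finite B"
    using finite_subset[OF AB(1) finite_index] finite_subset[OF AB(2) finite_index] .
  define e where "e p = min (Suc p) P" for p
  define L where "L r = dyadic_layer P lam p (y r)" for r
  define M where "M s = dyadic_layer P kap q (w s)" for s
  have "cmod (\<Sum>r\<in>A. \<Sum>s\<in>B. of_real (L r) * of_real (M s) * G r s)
      \<le> (lam / 2^e p) * (kap / 2^e q) * min (\<delta> * real k) (real (card {r\<in>A. L r \<noteq> 0}) * real (card {s\<in>B. M s \<noteq> 0}) / real k)"
    using AB y w lam kap dyadic_layer_bounds by (intro weighted_block_form_le) (auto simp: L_def M_def e_def)
  also have "\<dots> \<le> lam * kap * min (\<delta> * real k / 2^(e p + e q)) (2^(e p + e q) / real k)"
  proof (rule layer_pair_scale_le)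
    show "real (card {r\<in>A. L r \<noteq> 0}) \<le> 4^e p"
      unfolding L_def e_def by (rule card_dyadic_layer_support_le[OF fin(1) AB(6) y lam])
    show "real (card {s\<in>B. M s \<noteq> 0}) \<le> 4^e q"
      unfolding M_def e_def by (rule card_dyadic_layer_support_le[OF fin(2) AB(7) w kap])
  qed (use lam kap k_pos in auto)
  finally show ?thesis
    by (simp add: pair_weight_def L_def M_def e_def)
qed

definition block_const :: real where
  "block_const = (3 * real (log4_ceiling k) + 7) * sqrt \<delta>"

lemma block_const_nonneg: "0 \<le> block_const"
  using \<delta>_nonneg by (simp add: block_const_def)

lemma nonneg_block_form_le:
  assumes AB: "A \<subseteq> I" "B \<subseteq> I" "A \<inter> B = {}" "card A \<le> k" "card B \<le> k"
    and y: "\<And>r. r \<in> A \<Longrightarrow> 0 \<le> y r" and w: "\<And>s. s \<in> B \<Longrightarrow> 0 \<le> w s"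
  shows "cmod (\<Sum>r\<in>A. \<Sum>s\<in>B. of_real (y r) * of_real (w s) * G r s) \<le> block_const * (L2_set y A * L2_set w B)"
proof -
  have fin: "finite A" "finite B"
    using finite_subset[OF AB(1) finite_index] finite_subset[OF AB(2) finite_index] .
  define P where "P = log4_ceiling k"
  define lam where "lam = L2_set y A"
  define kap where "kap = L2_set w B"
  consider (zero) "lam = 0 \<or> kap = 0" | (pos) "0 < lam" "0 < kap"
    using L2_set_nonneg[of y A] L2_set_nonneg[of w B] unfolding lam_def kap_def by linarith
  then show ?thesis
  proof cases
    case zero
    then have "(\<forall>r\<in>A. y r = 0) \<or> (\<forall>s\<in>B. w s = 0)"
      using fin by (simp add: lam_def kap_def L2_set_eq_0_iff)
    then show ?thesis
      using block_const_nonneg by auto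
  next
    case pos
    define T where "T p q = (\<Sum>r\<in>A. \<Sum>s\<in>B.
      of_real (dyadic_layer P lam p (y r)) * of_real (dyadic_layer P kap q (w s)) * G r s)" for p q
    have card_le: "card A \<le> 4^P" "card B \<le> 4^P"
      using AB(4,5) le_four_power_log4_ceiling[of k] by (simp_all add: P_def)
    have "(\<Sum>r\<in>A. \<Sum>s\<in>B. of_real (y r) * of_real (w s) * G r s) = (\<Sum>p\<le>P. \<Sum>q\<le>P. T p q)"
      unfolding T_def
    proof (rule sum_sum_mult_expand)
      show "complex_of_real (y r) = (\<Sum>p\<le>P. of_real (dyadic_layer P lam p (y r)))" if "r \<in> A" for r
        using that fin member_le_L2_set[of A r y] by (simp add: lam_def sum_dyadic_layers flip: of_real_sum)
      show "complex_of_real (w s) = (\<Sum>q\<le>P. of_real (dyadic_layer P kap q (w s)))" if "s \<in> B" for s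
        using that fin member_le_L2_set[of B s w] by (simp add: kap_def sum_dyadic_layers flip: of_real_sum)
    qed
    moreover have "cmod (\<Sum>p\<le>P. \<Sum>q\<le>P. T p q)
        \<le> (\<Sum>p\<le>P. \<Sum>q\<le>P. lam * kap * pair_weight (min (Suc p) P + min (Suc q) P))"
      unfolding T_def using AB card_le y w lam_def kap_def pos
      by (intro norm_sum[THEN order_trans] sum_mono norm_sum[THEN order_trans] layer_pair_form_le) auto
    moreover have "\<dots> \<le> lam * kap * ((3 * real P + 7) * sqrt \<delta>)"
      using pos sum_layer_pair_weights_le[of P] by (simp add: mult_left_mono flip: sum_distrib_left)
    ultimately show ?thesis
      by (simp add: block_const_def P_def lam_def kap_def mult_ac)
  qed
qed

lemma block_form_le:
  assumes AB: "A \<subseteq> I" "B \<subseteq> I" "A \<inter> B = {}" "card A \<le> k" "card B \<le> k"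
  shows "cmod (\<Sum>r\<in>A. \<Sum>s\<in>B. x r * cnj (z s) * G r s)
    \<le> 4 * block_const * L2_set (\<lambda>r. cmod (x r)) A * L2_set (\<lambda>s. cmod (z s)) B"
proof -
  define T where "T a b = (\<Sum>r\<in>A. \<Sum>s\<in>B. of_real (quadrant_part a (x r)) * of_real (quadrant_part b (z s)) * G r s)" for a b
  have "(\<Sum>r\<in>A. \<Sum>s\<in>B. x r * cnj (z s) * G r s)
      = (\<Sum>a<4. \<Sum>b<4. \<Sum>r\<in>A. \<Sum>s\<in>B. (\<i>^a * of_real (quadrant_part a (x r))) * (cnj (\<i>^b) * of_real (quadrant_part b (z s))) * G r s)"
  proof (rule sum_sum_mult_expand)
    show "x r = (\<Sum>a<4. \<i>^a * of_real (quadrant_part a (x r)))" for r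
      by (simp add: sum_quadrant_parts)
    show "cnj (z s) = (\<Sum>b<4. cnj (\<i>^b) * of_real (quadrant_part b (z s)))" for s
      by (subst (1) sum_quadrant_parts[of "z s", symmetric]) simp
  qed
  also have "\<dots> = (\<Sum>a<4. \<Sum>b<4. \<i>^a * cnj (\<i>^b) * T a b)"
    by (simp add: T_def sum_distrib_left mult_ac)
  finally have "cmod (\<Sum>r\<in>A. \<Sum>s\<in>B. x r * cnj (z s) * G r s) \<le> (\<Sum>a<4. \<Sum>b<4. cmod (T a b))"
    by (auto simp: norm_mult norm_power intro!: norm_sum[THEN order_trans] sum_mono)
  also have "\<dots> \<le> (\<Sum>a<4. \<Sum>b<4. block_const * (L2_set (\<lambda>r. quadrant_part a (x r)) A * L2_set (\<lambda>s. quadrant_part b (z s)) B))"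
    unfolding T_def by (intro sum_mono nonneg_block_form_le[OF AB] quadrant_part_nonneg)
  also have "\<dots> = block_const * ((\<Sum>a<4. L2_set (\<lambda>r. quadrant_part a (x r)) A) * (\<Sum>b<4. L2_set (\<lambda>s. quadrant_part b (z s)) B))"
    by (simp only: sum_product) (simp only: sum_distrib_left)
  also have "\<dots> \<le> block_const * ((2 * L2_set (\<lambda>r. cmod (x r)) A) * (2 * L2_set (\<lambda>s. cmod (z s)) B))"
    by (intro mult_left_mono mult_mono sum_L2_set_quadrant_parts_le block_const_nonneg sum_nonneg) auto
  finally show ?thesis
    by (simp add: mult_ac)
qed

lemma self_block_form_eq_off_diagonal:
  assumes "A \<subseteq> I"
  shows "(\<Sum>r\<in>A. \<Sum>s\<in>A. x r * cnj (x s) * G r s) - of_real (\<Sum>r\<in>A. (cmod (x r))^2)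
    = (\<Sum>r\<in>A. \<Sum>s\<in>A - {r}. x r * cnj (x s) * G r s)"
proof -
  have fin: "finite A"
    using finite_subset[OF assms finite_index] .
  have "(\<Sum>r\<in>A. \<Sum>s\<in>A. x r * cnj (x s) * G r s)
      = (\<Sum>r\<in>A. x r * cnj (x r) * G r r + (\<Sum>s\<in>A - {r}. x r * cnj (x s) * G r s))"
    using fin by (intro sum.cong refl) (rule sum.remove)
  also have "\<dots> = of_real (\<Sum>r\<in>A. (cmod (x r))^2) + (\<Sum>r\<in>A. \<Sum>s\<in>A - {r}. x r * cnj (x s) * G r s)"
    using assms gram_diag by (simp add: sum.distrib complex_norm_square subset_iff del: of_real_power)
  finally show ?thesis
    by simp
qed

lemma bipartition_form_le:
  assumes "A \<subseteq> I" "card A \<le> k" "S \<subseteq> A"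
  shows "cmod (\<Sum>r\<in>S. \<Sum>s\<in>A - S. x r * cnj (x s) * G r s) \<le> 2 * block_const * (\<Sum>r\<in>A. (cmod (x r))^2)"
proof -
  have fin: "finite A"
    using finite_subset[OF assms(1) finite_index] .
  define n where "n S = L2_set (\<lambda>r. cmod (x r)) S" for S
  have "card S \<le> k" "card (A - S) \<le> k"
    using card_mono[OF fin assms(3)] card_mono[OF fin, of "A - S"] assms(2) by auto
  then have "cmod (\<Sum>r\<in>S. \<Sum>s\<in>A - S. x r * cnj (x s) * G r s) \<le> 4 * block_const * n S * n (A - S)"
    unfolding n_def using assms by (intro block_form_le) auto
  also have "\<dots> \<le> 2 * block_const * ((n S)^2 + (n (A - S))^2)"
    using mult_left_mono[OF sum_squares_bound[of "n S" "n (A - S)"], of "2 * block_const"] block_const_nonneg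
    by (simp add: algebra_simps)
  also have "(n S)^2 + (n (A - S))^2 = (\<Sum>r\<in>A. (cmod (x r))^2)"
    unfolding n_def power2_L2_set using sum.subset_diff[OF assms(3) fin, of "\<lambda>r. (cmod (x r))^2"]
    by (simp add: add.commute)
  finally show ?thesis .
qed

lemma diagonal_block_form_le:
  assumes A: "A \<subseteq> I" "card A \<le> k"
  shows "cmod ((\<Sum>r\<in>A. \<Sum>s\<in>A. x r * cnj (x s) * G r s) - of_real (\<Sum>r\<in>A. (cmod (x r))^2))
    \<le> 8 * block_const * (\<Sum>r\<in>A. (cmod (x r))^2)"
proof -
  have fin: "finite A"
    using finite_subset[OF A(1) finite_index] .
  define E where "E = (\<Sum>r\<in>A. (cmod (x r))^2)"
  define off where "off = (\<Sum>r\<in>A. \<Sum>s\<in>A - {r}. x r * cnj (x s) * G r s)"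
  have "2^(card A - 2) * cmod off = cmod (\<Sum>S\<in>Pow A. \<Sum>r\<in>S. \<Sum>s\<in>A - S. x r * cnj (x s) * G r s)"
    by (simp add: off_def sum_bipartitions[OF fin] norm_mult norm_power)
  also have "\<dots> \<le> (\<Sum>S\<in>Pow A. 2 * block_const * E)"
    unfolding E_def using A by (intro norm_sum[THEN order_trans] sum_mono bipartition_form_le) auto
  also have "\<dots> = 2^(card A) * (2 * block_const * E)"
    using fin by (simp add: card_Pow)
  also have "\<dots> \<le> (4 * 2^(card A - 2)) * (2 * block_const * E)"
    using block_const_nonneg power_increasing[of "card A" "card A - 2 + 2" "2::real"]
    by (intro mult_right_mono) (auto simp: E_def sum_nonneg power_add)
  finally have "cmod off \<le> 8 * block_const * E"
    by simp
  then show ?thesis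
    using self_block_form_eq_off_diagonal[OF A(1)] by (simp add: E_def off_def)
qed

lemma sparse_form_le:
  assumes J: "J \<subseteq> I" "card J \<le> m * k"
  shows "cmod ((\<Sum>r\<in>J. \<Sum>s\<in>J. x r * cnj (x s) * G r s) - of_real (\<Sum>r\<in>J. (cmod (x r))^2))
    \<le> 4 * block_const * (real m + 1) * (\<Sum>r\<in>J. (cmod (x r))^2)"
proof -
  have fin: "finite J"
    using finite_subset[OF J(1) finite_index] .
  obtain B where B: "\<And>i. B i \<subseteq> J" "\<And>i. card (B i) \<le> k" "\<And>i j. i \<noteq> j \<Longrightarrow> B i \<inter> B j = {}"
    "(\<Union>i<m. B i) = J"
    using exists_partition_card_le[OF fin J(2) k_pos] by metis
  have fin_B: "finite (B i)" for i
    using finite_subset[OF B(1) fin] .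
  have B_I: "B i \<subseteq> I" for i
    using B(1) J(1) by blast
  have sum_blocks: "(\<Sum>r\<in>J. g r) = (\<Sum>i<m. \<Sum>r\<in>B i. g r)" for g :: "nat \<Rightarrow> 'b::comm_monoid_add"
    unfolding B(4)[symmetric] by (rule sum.UNION_disjoint) (use fin_B B(3) in auto)
  define Q where "Q i j = (\<Sum>r\<in>B i. \<Sum>s\<in>B j. x r * cnj (x s) * G r s)" for i j
  define E where "E i = (\<Sum>r\<in>B i. (cmod (x r))^2)" for i
  define v where "v i = L2_set (\<lambda>r. cmod (x r)) (B i)" for i
  have cauchy_schwarz: "(\<Sum>i<m. v i)^2 \<le> real m * (\<Sum>i<m. E i)"
    using power2_sum_le_card_mult_sum_power2[of "{..<m}" v] by (simp add: v_def E_def power2_L2_set)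
  have "(\<Sum>r\<in>J. \<Sum>s\<in>J. x r * cnj (x s) * G r s) - of_real (\<Sum>r\<in>J. (cmod (x r))^2)
      = (\<Sum>i<m. \<Sum>j<m. Q i j - (if i = j then of_real (E i) else 0))"
    by (simp add: sum_blocks[of "\<lambda>r. \<Sum>s\<in>J. _ r s"] sum_blocks[of "\<lambda>s. _ s"] Q_def E_def sum_subtractf
        sum.swap[of _ "B _" "{..<m}"])
  also have "cmod \<dots> \<le> (\<Sum>i<m. \<Sum>j<m. 4 * block_const * (v i * v j) + (if i = j then 4 * block_const * E i else 0))"
  proof (intro norm_sum[THEN order_trans] sum_mono)
    fix i j
    show "cmod (Q i j - (if i = j then of_real (E i) else 0))
      \<le> 4 * block_const * (v i * v j) + (if i = j then 4 * block_const * E i else 0)"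
    proof (cases "i = j")
      case True
      have "cmod (Q i i - of_real (E i)) \<le> 8 * block_const * E i"
        unfolding Q_def E_def using B_I B(2) by (intro diagonal_block_form_le)
      moreover have "(v i)^2 = E i"
        by (simp add: v_def E_def power2_L2_set)
      ultimately show ?thesis
        using True by (simp add: power2_eq_square algebra_simps)
    next
      case False
      have "cmod (Q i j) \<le> 4 * block_const * v i * v j"
        unfolding Q_def v_def using B_I B(2,3) False by (intro block_form_le)
      then show ?thesis
        using False by (simp add: mult.assoc)
    qed
  qed
  also have "\<dots> = 4 * block_const * ((\<Sum>i<m. v i)^2 + (\<Sum>i<m. E i))"
    by (simp add: sum.distrib sum_distrib_left sum_distrib_right power2_eq_square sum_product algebra_simps)
  also have "\<dots> \<le> 4 * block_const * (real m * (\<Sum>i<m. E i) + (\<Sum>i<m. E i))"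
    using cauchy_schwarz block_const_nonneg by (intro mult_left_mono add_right_mono) auto
  finally show ?thesis
    by (simp add: sum_blocks[of "\<lambda>r. (cmod (x r))^2"] E_def algebra_simps)
qed

end

section \<open>The columns of the matrix \<open>\<Phi>\<close>\<close>

lemma cinner_sum_sum:
  "cinner n (\<lambda>i. \<Sum>r\<in>A. x r * u r i) (\<lambda>i. \<Sum>s\<in>B. z s * u s i)
    = (\<Sum>r\<in>A. \<Sum>s\<in>B. x r * cnj (z s) * cinner n (u r) (u s))"
proof -
  have "cinner n (\<lambda>i. \<Sum>r\<in>A. x r * u r i) (\<lambda>i. \<Sum>s\<in>B. z s * u s i)
      = (\<Sum>i<n. \<Sum>r\<in>A. \<Sum>s\<in>B. x r * cnj (z s) * (u r i * cnj (u s i)))"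
    unfolding cinner_def by (simp add: sum_distrib_left sum_distrib_right mult_ac) (intro sum.cong refl sum.swap)
  also have "\<dots> = (\<Sum>r\<in>A. \<Sum>s\<in>B. \<Sum>i<n. x r * cnj (z s) * (u r i * cnj (u s i)))"
    by (subst sum.swap) (intro sum.cong refl sum.swap)
  finally show ?thesis
    by (simp add: cinner_def sum_distrib_left)
qed

lemma cinner_self: "cinner n v v = of_real ((cnorm2 n v)^2)"
  by (simp add: cinner_def cnorm2_def sum_nonneg complex_norm_square del: of_real_power)

lemma cmod_cinner_le_coherence:
  assumes "r \<in> {1..N}" "s \<in> {1..N}" "r \<noteq> s"
  shows "cmod (cinner n (u r) (u s)) \<le> coherence n N u"
proof -
  have "finite ((\<lambda>(r, s). cmod (cinner n (u r) (u s))) ` ({1..N} \<times> {1..N}) \<union> {0})"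
    by simp
  then have "finite ({cmod (cinner n (u r) (u s)) | r s. r \<in> {1..N} \<and> s \<in> {1..N} \<and> r \<noteq> s} \<union> {0})"
    by (rule rev_finite_subset) auto
  then show ?thesis
    unfolding coherence_def using assms by (intro Max_ge) blast+
qed

lemma columns_block_bounded_gram:
  assumes "0 < k" "0 \<le> \<delta>"
    and unit: "\<forall>j\<in>{1..N}. cnorm2 n (u j) = 1"
    and coh: "coherence n N u \<le> 1 / real k"
    and block: "\<forall>J1 J2. J1 \<subseteq> {1..N} \<longrightarrow> J2 \<subseteq> {1..N} \<longrightarrow> J1 \<inter> J2 = {} \<longrightarrow>
           card J1 \<le> k \<longrightarrow> card J2 \<le> k \<longrightarrow>
           cmod (cinner n (\<lambda>i. \<Sum>j\<in>J1. u j i) (\<lambda>i. \<Sum>j\<in>J2. u j i)) \<le> \<delta> * real k"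
  shows "block_bounded_gram {1..N} (\<lambda>r s. cinner n (u r) (u s)) k \<delta>"
proof
  fix A B
  assume AB: "A \<subseteq> {1..N}" "B \<subseteq> {1..N}" "A \<inter> B = {}" "card A \<le> k" "card B \<le> k"
  have "cmod (cinner n (\<lambda>i. \<Sum>r\<in>A. u r i) (\<lambda>i. \<Sum>s\<in>B. u s i)) \<le> \<delta> * real k"
    using block AB by blast
  then have "cmod (\<Sum>r\<in>A. \<Sum>s\<in>B. cinner n (u r) (u s)) \<le> \<delta> * real k"
    using cinner_sum_sum[of n "\<lambda>_. 1" u A "\<lambda>_. 1" B] by simp
  moreover have "cmod (\<Sum>r\<in>A. \<Sum>s\<in>B. cinner n (u r) (u s)) \<le> (\<Sum>r\<in>A. \<Sum>s\<in>B. 1 / real k)"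
  proof (intro norm_sum[THEN order_trans] sum_mono)
    fix r s
    assume "r \<in> A" "s \<in> B"
    then have "r \<in> {1..N}" "s \<in> {1..N}" "r \<noteq> s"
      using AB(1-3) by blast+
    then show "cmod (cinner n (u r) (u s)) \<le> 1 / real k"
      using cmod_cinner_le_coherence coh by (meson order_trans)
  qed
  ultimately show "cmod (\<Sum>r\<in>A. \<Sum>s\<in>B. cinner n (u r) (u s)) \<le> min (\<delta> * real k) (real (card A) * real (card B) / real k)"
    by simp
qed (use assms unit cinner_self in auto)

lemma matvec_support:
  assumes "J \<subseteq> {1..N}" "\<forall>j\<in>{1..N} - J. x j = 0"
  shows "matvec N u x = (\<lambda>i. \<Sum>j\<in>J. x j * u j i)"
  unfolding matvec_def using assms by (intro ext sum.mono_neutral_right) auto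

lemma cnorm2_shift_support:
  assumes "J \<subseteq> {1..N}" "\<forall>j\<in>{1..N} - J. x j = 0"
  shows "(cnorm2 N (\<lambda>j. x (j + 1)))^2 = (\<Sum>j\<in>J. (cmod (x j))^2)"
proof -
  have "(cnorm2 N (\<lambda>j. x (j + 1)))^2 = (\<Sum>j\<in>{1..N}. (cmod (x j))^2)"
    by (simp add: cnorm2_def sum_nonneg sum.atLeast1_atMost_eq)
  also have "\<dots> = (\<Sum>j\<in>J. (cmod (x j))^2)"
    using assms by (intro sum.mono_neutral_right) auto
  finally show ?thesis .
qed

theorem lemma1:
  fixes n N k s :: nat and u :: "nat \<Rightarrow> nat \<Rightarrow> complex" and \<delta> :: real
  assumes "k \<ge> 2 ^ 10"
    and "s > 0"
    and "\<forall>j\<in>{1..N}. cnorm2 n (u j) = 1"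
    and "coherence n N u \<le> 1 / real k"
    and "\<delta> \<ge> 0"
    and "\<forall>J1 J2. J1 \<subseteq> {1..N} \<longrightarrow> J2 \<subseteq> {1..N} \<longrightarrow> J1 \<inter> J2 = {} \<longrightarrow>
           card J1 \<le> k \<longrightarrow> card J2 \<le> k \<longrightarrow>
           cmod (cinner n (\<lambda>i. \<Sum>j\<in>J1. u j i) (\<lambda>i. \<Sum>j\<in>J2. u j i)) \<le> \<delta> * real k"
  shows "RIP n N u (2 * s * k) (44 * real s * sqrt \<delta> * ln (real k))"
proof -
  interpret block_bounded_gram "{1..N}" "\<lambda>r s. cinner n (u r) (u s)" k \<delta>
    using assms by (intro columns_block_bounded_gram) auto
  show ?thesis
    unfolding RIP_def
  proof (intro allI impI)
    fix x :: "nat \<Rightarrow> complex"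
    assume "sparse N (2 * s * k) x"
    define J where "J = {j\<in>{1..N}. x j \<noteq> 0}"
    have J: "J \<subseteq> {1..N}" "\<forall>j\<in>{1..N} - J. x j = 0" "card J \<le> (2 * s) * k"
      using \<open>sparse N (2 * s * k) x\<close> by (auto simp: J_def sparse_def)
    define Q where "Q = (\<Sum>r\<in>J. \<Sum>s\<in>J. x r * cnj (x s) * cinner n (u r) (u s))"
    define E where "E = (\<Sum>r\<in>J. (cmod (x r))^2)"
    have "(cnorm2 n (matvec N u x))^2 = Re Q"
      using cinner_self[of n "matvec N u x"] by (simp add: Q_def matvec_support[OF J(1,2)] cinner_sum_sum)
    then have "\<bar>(cnorm2 n (matvec N u x))^2 - E\<bar> \<le> cmod (Q - of_real E)"
      using abs_Re_le_cmod[of "Q - of_real E"] by simp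
    also have "\<dots> \<le> 4 * block_const * (real (2 * s) + 1) * E"
      unfolding Q_def E_def using J by (intro sparse_form_le) auto
    also have "\<dots> \<le> 44 * real s * sqrt \<delta> * ln (real k) * E"
      using rip_constant_le[of k s \<delta>] assms by (intro mult_right_mono) (auto simp: block_const_def E_def sum_nonneg)
    finally show "(1 - 44 * real s * sqrt \<delta> * ln (real k)) * (cnorm2 N (\<lambda>j. x (j + 1)))\<^sup>2 \<le> (cnorm2 n (matvec N u x))\<^sup>2 \<and>
        (cnorm2 n (matvec N u x))\<^sup>2 \<le> (1 + 44 * real s * sqrt \<delta> * ln (real k)) * (cnorm2 N (\<lambda>j. x (j + 1)))\<^sup>2"
      using cnorm2_shift_support[OF J(1,2)] by (simp add: E_def abs_le_iff algebra_simps)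
  qed
qed

end
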